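(* Fix $K\in\mathbb N$, a realization of the random basis functions, and $i\in\mathbb N$. Then $\hat\theta^i_{K,m}\to\theta^i_K$ $\mathbb Q$-almost surely as $m\to\infty$.
   Context: Let $d,N\ge1$, let $X=(X_0,\dots,X_N)$ be a discrete-time Markov process with values in $\mathbb R^d$, $\mathbb Q$ the pricing measure, $\mathbb E$ expectation under $\mathbb Q$, $g:\mathbb R^d\to[0,\infty)$ a measurable payoff and $\alpha\in(0,1)$ the discount factor. Random basis functions: $\alpha_k\in\mathbb R^{d+1},\beta_k\in\mathbb R$ with i.i.d. standard Gaussian entries, $\phi_k(x,n):=\sigma(\alpha_k^\top(x,n)^\top+\beta_k)$ with $\sigma$ a bounded activation function, $\phi_{1:K}:=(\phi_1,\dots,\phi_K)$ (a row vector), and $(\Phi_{K,n}\theta)(x):=\sum_{k=1}^K\theta_k\phi_k(x,n)$ for $\theta\in\mathbb R^K$; by convention the term $\max(g(X_N),(\Phi_{K,N}\theta)(X_N))$ is read as $g(X_N)$. Assume the matrix $\mathbb E\big[\sum_{n=0}^{N-1}\phi_{1:K}^\top(X_n,n)\phi_{1:K}(X_n,n)\big]$ is invertible. Given $\theta_K^0\in\mathbb R^K$, define $\theta_K^{i+1}:=\alpha\Big(\mathbb E\big[\sum_{n=0}^{N-1}\phi_{1:K}^\top(X_n,n)\phi_{1:K}(X_n,n)\big]\Big)^{-1}\mathbb E\Big[\sum_{n=0}^{N-1}\phi_{1:K}^\top(X_n,n)\max\big(g(X_{n+1}),(\Phi_{K,n+1}\theta_K^i)(X_{n+1})\big)\Big].$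 Let $(x_0^j,\dots,x_N^j)$, $j=1,\dots,m$, be i.i.d. samples of $X$ under $\mathbb Q$, fixed for all iterations, set $\hat\theta^0_{K,m}:=\theta_K^0$ and $\hat\theta^{i+1}_{K,m}:=\alpha\Big(\sum_{j=1}^m\sum_{n=0}^{N-1}\phi_{1:K}^\top(x_n^j,n)\phi_{1:K}(x_n^j,n)\Big)^{-1}\sum_{j=1}^m\sum_{n=0}^{N-1}\phi_{1:K}^\top(x_n^j,n)\max\big(g(x_{n+1}^j),(\Phi_{K,n+1}\hat\theta^i_{K,m})(x_{n+1}^j)\big).$ *)

theory Defs
  imports "HOL-Probability.Probability"
begin

text \<open>Random basis function phi_k(x,n) = sigma(alpha_k^T (x,n) + beta_k), for a fixed
  realization alpha_k = (a k, c k) in R^d x R = R^(d+1) and beta_k = b k.\<close>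
definition rbf :: "(real \<Rightarrow> real) \<Rightarrow> ('k \<Rightarrow> real^'d) \<Rightarrow> ('k \<Rightarrow> real) \<Rightarrow> ('k \<Rightarrow> real)
    \<Rightarrow> 'k \<Rightarrow> real^'d \<Rightarrow> nat \<Rightarrow> real" where
  "rbf \<sigma> a c b k x n = \<sigma> (a k \<bullet> x + c k * real n + b k)"

definition Phi :: "('k::finite \<Rightarrow> 'x \<Rightarrow> nat \<Rightarrow> real) \<Rightarrow> real^'k \<Rightarrow> nat \<Rightarrow> 'x \<Rightarrow> real" where
  "Phi \<phi> \<theta> n x = (\<Sum>k\<in>UNIV. \<theta> $ k * \<phi> k x n)"

definition contval :: "nat \<Rightarrow> ('x \<Rightarrow> real) \<Rightarrow> ('k::finite \<Rightarrow> 'x \<Rightarrow> nat \<Rightarrow> real)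
    \<Rightarrow> real^'k \<Rightarrow> nat \<Rightarrow> 'x \<Rightarrow> real" where
  "contval N g \<phi> \<theta> n x = (if n = N then g x else max (g x) (Phi \<phi> \<theta> n x))"

definition gram :: "'w measure \<Rightarrow> ('w \<Rightarrow> nat \<Rightarrow> 'x) \<Rightarrow> nat \<Rightarrow> ('k::finite \<Rightarrow> 'x \<Rightarrow> nat \<Rightarrow> real)
    \<Rightarrow> real^'k^'k" where
  "gram M X N \<phi> = (\<chi> i j. \<integral>\<omega>. (\<Sum>n<N. \<phi> i (X \<omega> n) n * \<phi> j (X \<omega> n) n) \<partial>M)"

definition target :: "'w measure \<Rightarrow> ('w \<Rightarrow> nat \<Rightarrow> 'x) \<Rightarrow> nat \<Rightarrow> ('x \<Rightarrow> real)
    \<Rightarrow> ('k::finite \<Rightarrow> 'x \<Rightarrow> nat \<Rightarrow> real) \<Rightarrow> real^'k \<Rightarrow> real^'k" where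
  "target M X N g \<phi> \<theta> = (\<chi> i. \<integral>\<omega>. (\<Sum>n<N. \<phi> i (X \<omega> n) n *
       contval N g \<phi> \<theta> (Suc n) (X \<omega> (Suc n))) \<partial>M)"

primrec theta :: "'w measure \<Rightarrow> ('w \<Rightarrow> nat \<Rightarrow> 'x) \<Rightarrow> nat \<Rightarrow> ('x \<Rightarrow> real)
    \<Rightarrow> ('k::finite \<Rightarrow> 'x \<Rightarrow> nat \<Rightarrow> real) \<Rightarrow> real \<Rightarrow> real^'k \<Rightarrow> nat \<Rightarrow> real^'k" where
  "theta M X N g \<phi> \<alpha> \<theta>0 0 = \<theta>0"
| "theta M X N g \<phi> \<alpha> \<theta>0 (Suc i) =
     \<alpha> *\<^sub>R (matrix_inv (gram M X N \<phi>) *v target M X N g \<phi> (theta M X N g \<phi> \<alpha> \<theta>0 i))"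

text \<open>Empirical versions, built from sample paths xs 0, ..., xs (m-1) (i.e. j = 1..m).\<close>
definition emp_gram :: "(nat \<Rightarrow> nat \<Rightarrow> 'x) \<Rightarrow> nat \<Rightarrow> nat \<Rightarrow> ('k::finite \<Rightarrow> 'x \<Rightarrow> nat \<Rightarrow> real)
    \<Rightarrow> real^'k^'k" where
  "emp_gram xs m N \<phi> = (\<chi> i j. \<Sum>l<m. \<Sum>n<N. \<phi> i (xs l n) n * \<phi> j (xs l n) n)"

definition emp_target :: "(nat \<Rightarrow> nat \<Rightarrow> 'x) \<Rightarrow> nat \<Rightarrow> nat \<Rightarrow> ('x \<Rightarrow> real)
    \<Rightarrow> ('k::finite \<Rightarrow> 'x \<Rightarrow> nat \<Rightarrow> real) \<Rightarrow> real^'k \<Rightarrow> real^'k" where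
  "emp_target xs m N g \<phi> \<theta> = (\<chi> i. \<Sum>l<m. \<Sum>n<N. \<phi> i (xs l n) n *
       contval N g \<phi> \<theta> (Suc n) (xs l (Suc n)))"

primrec theta_hat :: "(nat \<Rightarrow> nat \<Rightarrow> 'x) \<Rightarrow> nat \<Rightarrow> nat \<Rightarrow> ('x \<Rightarrow> real)
    \<Rightarrow> ('k::finite \<Rightarrow> 'x \<Rightarrow> nat \<Rightarrow> real) \<Rightarrow> real \<Rightarrow> real^'k \<Rightarrow> nat \<Rightarrow> real^'k" where
  "theta_hat xs m N g \<phi> \<alpha> \<theta>0 0 = \<theta>0"
| "theta_hat xs m N g \<phi> \<alpha> \<theta>0 (Suc i) =
     \<alpha> *\<^sub>R (matrix_inv (emp_gram xs m N \<phi>) *v emp_target xs m N g \<phi> (theta_hat xs m N g \<phi> \<alpha> \<theta>0 i))"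

definition natural_filtration :: "'w measure \<Rightarrow> ('w \<Rightarrow> nat \<Rightarrow> 'x::topological_space) \<Rightarrow> nat \<Rightarrow> 'w measure" where
  "natural_filtration M X n = sigma (space M)
     (\<Union>k\<in>{..n}. {(\<lambda>\<omega>. X \<omega> k) -` B \<inter> space M | B. B \<in> sets borel})"

definition markov_process :: "'w measure \<Rightarrow> ('w \<Rightarrow> nat \<Rightarrow> 'x::topological_space) \<Rightarrow> nat \<Rightarrow> bool" where
  "markov_process M X N \<longleftrightarrow> (\<forall>n<N. \<forall>A\<in>sets (borel :: 'x measure).
     AE \<omega> in M. real_cond_exp M (natural_filtration M X n) (\<lambda>\<omega>. indicator A (X \<omega> (Suc n)) :: real) \<omega>
              = real_cond_exp M (vimage_algebra (space M) (\<lambda>\<omega>. X \<omega> n) borel)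
                   (\<lambda>\<omega>. indicator A (X \<omega> (Suc n)) :: real) \<omega>)"

end

theory Submission
  imports Defs
begin

(* The iteration is theta |-> alpha * G^-1 T(theta) and its empirical version uses the sums
   G_m, T_m(theta) over m sample paths.  Every entry of G_m / m and T_m(theta) / m is a sample
   mean of a bounded, resp. integrable, functional of i.i.d. paths and converges almost surely by
   the strong law of large numbers.  Since the basis functions are bounded and max is 1-Lipschitz,
   T_m(theta) / m is Lipschitz in theta uniformly in m, so convergence of the previous iterate
   carries over to the targets; inversion is continuous at the invertible G (Cramer's rule) and
   the rescaling by m cancels in G_m^-1 T_m.  Induction on i, with one null set per iteration.

   The strong law is derived from Garsia's maximal ergodic inequality and Kolmogorov's 0-1 law:
   if E Y < 0, the event limsup S_k / k > 0 is a tail event contained in {S_k > 0 for some k},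
   which by the maximal inequality has probability < 1, so it is null. *)

section \<open>Strong law of large numbers\<close>

lemma (in prob_space) indep_sets_reindex:
  assumes inj: "inj_on f I" and indep: "indep_sets F (f ` I)"
  shows "indep_sets (\<lambda>i. F (f i)) I"
proof (rule indep_setsI)
  show "F (f i) \<subseteq> events" if "i \<in> I" for i
    using indep that unfolding indep_sets_def by auto
next
  fix A J assume J: "J \<noteq> {}" "J \<subseteq> I" "finite J" and A: "\<forall>j\<in>J. A j \<in> F (f j)"
  have inj_J: "inj_on f J" using inj J(2) by (rule inj_on_subset)
  let ?A' = "\<lambda>k. A (inv_into J f k)"
  have "prob (\<Inter>k\<in>f ` J. ?A' k) = (\<Prod>k\<in>f ` J. prob (?A' k))"
    using J A inj_J by (intro indep_setsD[OF indep]) auto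
  then show "prob (\<Inter>j\<in>J. A j) = (\<Prod>j\<in>J. prob (A j))"
    using inj_J by (simp add: prod.reindex)
qed

lemma (in prob_space) indep_vars_reindex:
  assumes "inj_on f I" and "indep_vars M' X (f ` I)"
  shows "indep_vars (\<lambda>i. M' (f i)) (\<lambda>i. X (f i)) I"
  using assms indep_sets_reindex[of f I] unfolding indep_vars_def by auto

definition max_partial_sum :: "(nat \<Rightarrow> real) \<Rightarrow> nat \<Rightarrow> real" where
  "max_partial_sum y n = Max ((\<lambda>k. \<Sum>j<k. y j) ` {..n})"

lemma max_partial_sum_ge: "k \<le> n \<Longrightarrow> (\<Sum>j<k. y j) \<le> max_partial_sum y n"
  unfolding max_partial_sum_def by (intro Max_ge) auto

lemma max_partial_sum_nonneg: "0 \<le> max_partial_sum y n"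
  using max_partial_sum_ge[of 0 n y] by simp

lemma max_partial_sum_attained: obtains k where "k \<le> n" "max_partial_sum y n = (\<Sum>j<k. y j)"
proof -
  have "max_partial_sum y n \<in> (\<lambda>k. \<Sum>j<k. y j) ` {..n}"
    unfolding max_partial_sum_def by (intro Max_in) auto
  then show ?thesis using that by auto
qed

lemma max_partial_sum_pos_iff: "0 < max_partial_sum y n \<longleftrightarrow> (\<exists>k\<le>n. 0 < (\<Sum>j<k. y j))"
  unfolding max_partial_sum_def by (subst Max_gr_iff) auto

lemma abs_max_partial_sum_le: "\<bar>max_partial_sum y n\<bar> \<le> (\<Sum>j<n. \<bar>y j\<bar>)"
proof -
  obtain k where k: "k \<le> n" "max_partial_sum y n = (\<Sum>j<k. y j)"
    by (rule max_partial_sum_attained)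
  have "(\<Sum>j<k. y j) \<le> (\<Sum>j<n. \<bar>y j\<bar>)"
    using k(1) by (intro order.trans[OF sum_mono sum_mono2]) auto
  then show ?thesis using k(2) max_partial_sum_nonneg[of y n] by simp
qed

lemma max_partial_sum_Suc_shift:
  "max_partial_sum y n - max_partial_sum (\<lambda>j. y (Suc j)) n
     \<le> (if 0 < max_partial_sum y n then y 0 else 0)"
proof (cases "0 < max_partial_sum y n")
  case True
  obtain k where k: "k \<le> n" "max_partial_sum y n = (\<Sum>j<k. y j)"
    by (rule max_partial_sum_attained)
  with True obtain k' where k': "k = Suc k'" by (cases k) auto
  have "(\<Sum>j<k. y j) = y 0 + (\<Sum>j<k'. y (Suc j))"
    unfolding k' by (rule sum.lessThan_Suc_shift)
  moreover have "(\<Sum>j<k'. y (Suc j)) \<le> max_partial_sum (\<lambda>j. y (Suc j)) n"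
    using k k' by (intro max_partial_sum_ge) auto
  ultimately show ?thesis using True k(2) by simp
next
  case False
  then show ?thesis using max_partial_sum_nonneg[of "\<lambda>j. y (Suc j)" n] by simp
qed

lemma max_partial_sum_cong:
  "(\<And>j. j < n \<Longrightarrow> y j = z j) \<Longrightarrow> max_partial_sum y n = max_partial_sum z n"
  unfolding max_partial_sum_def by (intro arg_cong[where f = Max] image_cong refl sum.cong) auto

lemma borel_measurable_max_partial_sum [measurable]:
  "(\<And>j. f j \<in> borel_measurable M) \<Longrightarrow> (\<lambda>x. max_partial_sum (\<lambda>j. f j x) n) \<in> borel_measurable M"
  unfolding max_partial_sum_def by measurable

lemma measurable_max_partial_sum_PiM:
  "(\<lambda>h. max_partial_sum h n) \<in> borel_measurable (\<Pi>\<^sub>M j\<in>{..<n}. (borel :: real measure))"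
  unfolding max_partial_sum_def
proof (rule borel_measurable_Max)
  fix k assume "k \<in> {..n}"
  then show "(\<lambda>h. \<Sum>j<k. h j) \<in> borel_measurable (\<Pi>\<^sub>M j\<in>{..<n}. (borel :: real measure))"
    by (intro borel_measurable_sum measurable_component_singleton) auto
qed simp

lemma (in prob_space) integrable_max_partial_sum:
  assumes "\<And>j. integrable M (Z j)"
  shows "integrable M (\<lambda>\<omega>. max_partial_sum (\<lambda>j. Z j \<omega>) n)"
proof (rule Bochner_Integration.integrable_bound)
  show "integrable M (\<lambda>\<omega>. \<Sum>j<n. \<bar>Z j \<omega>\<bar>)" using assms by auto
  have [measurable]: "Z j \<in> borel_measurable M" for j using assms by auto
  show "(\<lambda>\<omega>. max_partial_sum (\<lambda>j. Z j \<omega>) n) \<in> borel_measurable M" by measurable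
  show "AE \<omega> in M. norm (max_partial_sum (\<lambda>j. Z j \<omega>) n) \<le> norm (\<Sum>j<n. \<bar>Z j \<omega>\<bar>)"
    using abs_max_partial_sum_le by (intro AE_I2) (simp add: order.trans[OF _ abs_ge_self])
qed

(* limsup s k / k > 0, with the rate ranging over a countable set so that the event is measurable *)
definition pos_upper_rate :: "(nat \<Rightarrow> real) \<Rightarrow> bool" where
  "pos_upper_rate s \<longleftrightarrow> (\<exists>r::nat. \<forall>K. \<exists>k\<ge>K. real k / real (Suc r) < s k)"

lemma pos_upper_rate_shift:
  assumes s: "pos_upper_rate s" and shift: "\<And>k. n \<le> k \<Longrightarrow> t k = s k + D"
  shows "pos_upper_rate t"
proof -
  obtain r where r: "\<forall>K. \<exists>k\<ge>K. real k / real (Suc r) < s k"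
    using s unfolding pos_upper_rate_def by auto
  have "\<exists>k\<ge>K. real k / real (Suc (2 * r + 1)) < t k" for K
  proof -
    obtain k where k: "max K n \<le> k" "2 * real (Suc r) * \<bar>D\<bar> \<le> real k"
      "real k / real (Suc r) < s k"
      using r[rule_format, of "max (max K n) (nat \<lceil>2 * real (Suc r) * \<bar>D\<bar>\<rceil>)"] by auto
    have "real (Suc (2 * r + 1)) = 2 * real (Suc r)" by simp
    then have "real k / real (Suc (2 * r + 1)) = real k / real (Suc r) - real k / (2 * real (Suc r))"
      by (simp add: field_simps del: of_nat_Suc)
    also have "\<dots> < s k + D"
    proof -
      have "\<bar>D\<bar> \<le> real k / (2 * real (Suc r))"
        using k(2) by (simp add: field_simps del: of_nat_Suc)
      then show ?thesis using k(3) by linarith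
    qed
    also have "\<dots> = t k" using k(1) shift by simp
    finally show ?thesis using k(1) by auto
  qed
  then show ?thesis unfolding pos_upper_rate_def by blast
qed

lemma sum_lessThan_add_shift: "(\<Sum>j<n + m. f j) = (\<Sum>j<n. f j) + (\<Sum>j<m. f (n + j))"
  for f :: "nat \<Rightarrow> 'a::comm_monoid_add"
  by (induction m) (simp_all add: add.assoc)

lemma pos_upper_rate_drop_initial_terms:
  "pos_upper_rate (\<lambda>k. \<Sum>j<k - n. y (n + j)) \<longleftrightarrow> pos_upper_rate (\<lambda>k. \<Sum>j<k. y j)"
proof -
  have tail_sums: "(\<Sum>j<k - n. y (n + j)) = (\<Sum>j<k. y j) - (\<Sum>j<n. y j)" if "n \<le> k" for k
    using that sum_lessThan_add_shift[of y n "k - n"] by simp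
  show ?thesis
  proof
    show "pos_upper_rate (\<lambda>k. \<Sum>j<k. y j)" if "pos_upper_rate (\<lambda>k. \<Sum>j<k - n. y (n + j))"
      using that by (rule pos_upper_rate_shift[where n = n and D = "\<Sum>j<n. y j"]) (simp add: tail_sums)
    show "pos_upper_rate (\<lambda>k. \<Sum>j<k - n. y (n + j))" if "pos_upper_rate (\<lambda>k. \<Sum>j<k. y j)"
      using that by (rule pos_upper_rate_shift[where n = n and D = "- (\<Sum>j<n. y j)"]) (simp add: tail_sums)
  qed
qed

lemma (in prob_space) pos_upper_rate_partial_sums_tail:
  fixes Y :: "nat \<Rightarrow> 'a \<Rightarrow> real"
  assumes [measurable]: "\<And>j. Y j \<in> borel_measurable M"
  shows "{\<omega>\<in>space M. pos_upper_rate (\<lambda>k. \<Sum>j<k. Y j \<omega>)}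
           \<in> tail_events (\<lambda>j. sigma_sets (space M) {Y j -` B \<inter> space M | B. B \<in> sets borel})"
  unfolding tail_events_def
proof (intro InterI, clarify)
  fix n
  let ?A = "\<lambda>j. sigma_sets (space M) {Y j -` B \<inter> space M | B. B \<in> sets borel}"
  define Mn where "Mn = sigma (space M) (\<Union> (?A ` {n..}))"
  have "?A j \<subseteq> Pow (space M)" for j
    using sigma_sets_into_sp[of "{Y j -` B \<inter> space M | B. B \<in> sets borel}" "space M"] by auto
  then have gen: "\<Union> (?A ` {n..}) \<subseteq> Pow (space M)" by blast
  have sets_Mn: "sets Mn = sigma_sets (space M) (\<Union> (?A ` {n..}))"
    unfolding Mn_def using gen by (rule sets_measure_of)
  have space_Mn: "space Mn = space M"
    unfolding Mn_def using gen by (rule space_measure_of)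
  have [measurable]: "Y (n + j) \<in> borel_measurable Mn" for j
  proof (rule measurableI)
    fix B :: "real set" assume "B \<in> sets borel"
    then have "Y (n + j) -` B \<inter> space M \<in> ?A (n + j)" by auto
    then have "Y (n + j) -` B \<inter> space M \<in> \<Union> (?A ` {n..})"
      by (rule UN_I[rotated]) simp
    then show "Y (n + j) -` B \<inter> space Mn \<in> sets Mn"
      unfolding sets_Mn space_Mn by (rule sigma_sets.Basic)
  qed simp
  have "pos_upper_rate (\<lambda>k. \<Sum>j<k - n. Y (n + j) \<omega>) \<longleftrightarrow> pos_upper_rate (\<lambda>k. \<Sum>j<k. Y j \<omega>)" for \<omega>
    using pos_upper_rate_drop_initial_terms[of "\<lambda>j. Y j \<omega>" n] by simp
  then have "{\<omega>\<in>space M. pos_upper_rate (\<lambda>k. \<Sum>j<k. Y j \<omega>)}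
      = {\<omega>\<in>space Mn. pos_upper_rate (\<lambda>k. \<Sum>j<k - n. Y (n + j) \<omega>)}"
    by (simp add: space_Mn)
  also have "\<dots> \<in> sets Mn"
    unfolding pos_upper_rate_def by measurable
  finally show "{\<omega>\<in>space M. pos_upper_rate (\<lambda>k. \<Sum>j<k. Y j \<omega>)} \<in> sigma_sets (space M) (\<Union> (?A ` {n..}))"
    unfolding sets_Mn .
qed

lemma tendsto_average_of_rate_bounds:
  fixes s :: "nat \<Rightarrow> real"
  assumes "\<And>r::nat. eventually (\<lambda>k. \<bar>s k - real k * \<mu>\<bar> \<le> real k / real (Suc r)) sequentially"
  shows "(\<lambda>k. s k / real k) \<longlonglongrightarrow> \<mu>"
proof (rule tendstoI)
  fix e :: real assume "0 < e"
  then obtain r where r: "inverse (real (Suc r)) < e" using reals_Archimedean by blast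
  show "eventually (\<lambda>k. dist (s k / real k) \<mu> < e) sequentially"
    using assms[of r] eventually_gt_at_top[of 0]
  proof eventually_elim
    case (elim k)
    then have "\<bar>s k / real k - \<mu>\<bar> \<le> inverse (real (Suc r))"
      by (simp add: field_simps abs_divide del: of_nat_Suc)
    then show ?case using r by (simp add: dist_real_def)
  qed
qed

locale iid_seq = prob_space +
  fixes Y :: "nat \<Rightarrow> 'a \<Rightarrow> real"
  assumes indep_Y: "indep_vars (\<lambda>_. borel) Y UNIV"
    and distr_Y: "\<And>j. distr M borel (Y j) = distr M borel (Y 0)"
    and integrable_Y0: "integrable M (Y 0)"
begin

lemma measurable_Y [measurable]: "Y j \<in> borel_measurable M"
  using indep_Y unfolding indep_vars_def by auto

lemma integrable_Y: "integrable M (Y j)"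
proof -
  have "integrable (distr M borel (Y 0)) (\<lambda>x. x)"
    using integrable_Y0 by (subst integrable_distr_eq) auto
  then show ?thesis
    unfolding distr_Y[of j, symmetric] by (subst (asm) integrable_distr_eq) auto
qed

lemma distr_block_Suc:
  "distr M (\<Pi>\<^sub>M j\<in>{..<n}. borel) (\<lambda>\<omega>. \<lambda>j\<in>{..<n}. Y (Suc j) \<omega>)
     = distr M (\<Pi>\<^sub>M j\<in>{..<n}. borel) (\<lambda>\<omega>. \<lambda>j\<in>{..<n}. Y j \<omega>)"
proof (cases "n = 0")
  case True
  then show ?thesis by (simp add: restrict_def)
next
  case False
  have block: "distr M (\<Pi>\<^sub>M j\<in>{..<n}. borel) (\<lambda>\<omega>. \<lambda>j\<in>{..<n}. Y (f j) \<omega>)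
      = (\<Pi>\<^sub>M j\<in>{..<n}. distr M borel (Y 0))" if "inj f" for f
  proof -
    have "indep_vars (\<lambda>_. borel) Y (f ` {..<n})"
      using indep_vars_subset[OF indep_Y] by simp
    from indep_vars_reindex[OF inj_on_subset[OF that subset_UNIV] this]
    have "distr M (\<Pi>\<^sub>M j\<in>{..<n}. borel) (\<lambda>\<omega>. \<lambda>j\<in>{..<n}. Y (f j) \<omega>)
        = (\<Pi>\<^sub>M j\<in>{..<n}. distr M borel (Y (f j)))"
      using False indep_vars_iff_distr_eq_PiM[where I = "{..<n}" and M' = "\<lambda>_. borel" and X = "\<lambda>j. Y (f j)"] by auto
    also have "\<dots> = (\<Pi>\<^sub>M j\<in>{..<n}. distr M borel (Y 0))"
      by (intro PiM_cong refl distr_Y)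
    finally show ?thesis .
  qed
  show ?thesis
    using block[of Suc] block[of "\<lambda>j. j"] by (simp add: inj_def)
qed

lemma integral_max_partial_sum_Suc:
  "expectation (\<lambda>\<omega>. max_partial_sum (\<lambda>j. Y (Suc j) \<omega>) n)
     = expectation (\<lambda>\<omega>. max_partial_sum (\<lambda>j. Y j \<omega>) n)"
proof -
  have restrict: "max_partial_sum (\<lambda>j. Z j \<omega>) n = max_partial_sum (\<lambda>j\<in>{..<n}. Z j \<omega>) n"
    for Z :: "nat \<Rightarrow> 'a \<Rightarrow> real" and \<omega>
    by (rule max_partial_sum_cong) simp
  let ?P = "\<Pi>\<^sub>M j\<in>{..<n}. (borel :: real measure)"
  have "expectation (\<lambda>\<omega>. max_partial_sum (\<lambda>j\<in>{..<n}. Y (Suc j) \<omega>) n)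
      = integral\<^sup>L (distr M ?P (\<lambda>\<omega>. \<lambda>j\<in>{..<n}. Y (Suc j) \<omega>)) (\<lambda>h. max_partial_sum h n)"
    by (rule integral_distr[symmetric, OF _ measurable_max_partial_sum_PiM]) measurable
  also have "\<dots> = integral\<^sup>L (distr M ?P (\<lambda>\<omega>. \<lambda>j\<in>{..<n}. Y j \<omega>)) (\<lambda>h. max_partial_sum h n)"
    by (simp only: distr_block_Suc)
  also have "\<dots> = expectation (\<lambda>\<omega>. max_partial_sum (\<lambda>j\<in>{..<n}. Y j \<omega>) n)"
    by (rule integral_distr[OF _ measurable_max_partial_sum_PiM]) measurable
  finally show ?thesis unfolding restrict[of Y] restrict[of "\<lambda>j. Y (Suc j)"] .
qed

lemma maximal_ergodic_inequality:
  "0 \<le> expectation (\<lambda>\<omega>. if 0 < max_partial_sum (\<lambda>j. Y j \<omega>) n then Y 0 \<omega> else 0)"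
proof -
  have integrable: "integrable M (\<lambda>\<omega>. max_partial_sum (\<lambda>j. Y j \<omega>) n)"
    "integrable M (\<lambda>\<omega>. max_partial_sum (\<lambda>j. Y (Suc j) \<omega>) n)"
    by (intro integrable_max_partial_sum integrable_Y)+
  have "0 = expectation (\<lambda>\<omega>. max_partial_sum (\<lambda>j. Y j \<omega>) n - max_partial_sum (\<lambda>j. Y (Suc j) \<omega>) n)"
    using integral_max_partial_sum_Suc integrable by simp
  also have "\<dots> \<le> expectation (\<lambda>\<omega>. if 0 < max_partial_sum (\<lambda>j. Y j \<omega>) n then Y 0 \<omega> else 0)"
  proof (rule integral_mono)
    show "integrable M (\<lambda>\<omega>. if 0 < max_partial_sum (\<lambda>j. Y j \<omega>) n then Y 0 \<omega> else 0)"
      by (rule Bochner_Integration.integrable_bound[OF integrable_Y[of 0]]) auto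
    show "max_partial_sum (\<lambda>j. Y j \<omega>) n - max_partial_sum (\<lambda>j. Y (Suc j) \<omega>) n
        \<le> (if 0 < max_partial_sum (\<lambda>j. Y j \<omega>) n then Y 0 \<omega> else 0)" for \<omega>
      by (rule max_partial_sum_Suc_shift)
  qed (use integrable in auto)
  finally show ?thesis .
qed

lemma iid_seq_affine: "iid_seq M (\<lambda>j \<omega>. a * Y j \<omega> + b)"
proof
  show "indep_vars (\<lambda>_. borel) (\<lambda>j \<omega>. a * Y j \<omega> + b) UNIV"
    by (rule indep_vars_compose2[OF indep_Y, where Y = "\<lambda>_ x. a * x + b"]) auto
  have "distr M borel (\<lambda>\<omega>. a * Y j \<omega> + b) = distr (distr M borel (Y j)) borel (\<lambda>x. a * x + b)" for j
    by (subst distr_distr) (auto simp: comp_def)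
  then show "distr M borel (\<lambda>\<omega>. a * Y j \<omega> + b) = distr M borel (\<lambda>\<omega>. a * Y 0 \<omega> + b)" for j
    by (metis distr_Y)
  show "integrable M (\<lambda>\<omega>. a * Y 0 \<omega> + b)" using integrable_Y0 by auto
qed

lemma prob_partial_sum_pos_lt_1:
  assumes "expectation (Y 0) < 0"
  shows "prob {\<omega>\<in>space M. \<exists>k. 0 < (\<Sum>j<k. Y j \<omega>)} < 1"
proof (rule ccontr)
  let ?E = "{\<omega>\<in>space M. \<exists>k. 0 < (\<Sum>j<k. Y j \<omega>)}"
  assume "\<not> prob ?E < 1"
  then have "AE \<omega> in M. \<omega> \<in> ?E"
    using prob_le_1[of ?E] by (intro AE_prob_1) auto
  then have "AE \<omega> in M. (\<lambda>n. if 0 < max_partial_sum (\<lambda>j. Y j \<omega>) n then Y 0 \<omega> else 0) \<longlonglongrightarrow> Y 0 \<omega>"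
  proof eventually_elim
    case (elim \<omega>)
    then obtain k where k: "0 < (\<Sum>j<k. Y j \<omega>)" by auto
    have "eventually (\<lambda>n. 0 < max_partial_sum (\<lambda>j. Y j \<omega>) n) sequentially"
      using eventually_ge_at_top[of k] by eventually_elim (use k in \<open>auto simp: max_partial_sum_pos_iff\<close>)
    then show ?case
      by (rule tendsto_eventually[OF eventually_mono]) auto
  qed
  then have "(\<lambda>n. expectation (\<lambda>\<omega>. if 0 < max_partial_sum (\<lambda>j. Y j \<omega>) n then Y 0 \<omega> else 0))
      \<longlonglongrightarrow> expectation (Y 0)"
    by (intro integral_dominated_convergence[where w = "\<lambda>\<omega>. \<bar>Y 0 \<omega>\<bar>"]) (use integrable_Y in auto)
  then have "0 \<le> expectation (Y 0)"
    by (rule LIMSEQ_le_const) (auto intro: maximal_ergodic_inequality)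
  then show False using assms by simp
qed

lemma AE_not_pos_upper_rate:
  assumes "expectation (Y 0) < 0"
  shows "AE \<omega> in M. \<not> pos_upper_rate (\<lambda>k. \<Sum>j<k. Y j \<omega>)"
proof -
  let ?A = "\<lambda>j. sigma_sets (space M) {Y j -` B \<inter> space M | B. B \<in> sets borel}"
  let ?T = "{\<omega>\<in>space M. pos_upper_rate (\<lambda>k. \<Sum>j<k. Y j \<omega>)}"
  have T_events: "?T \<in> events"
    unfolding pos_upper_rate_def by measurable
  have "prob ?T = 0 \<or> prob ?T = 1"
  proof (rule kolmogorov_0_1_law)
    show "sigma_algebra (space M) (?A j)" for j
      by (rule sigma_algebra_sigma_sets) auto
    show "indep_sets ?A UNIV"
      using indep_Y unfolding indep_vars_def by auto
  qed (rule pos_upper_rate_partial_sums_tail, simp)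
  moreover have "prob ?T \<le> prob {\<omega>\<in>space M. \<exists>k. 0 < (\<Sum>j<k. Y j \<omega>)}"
  proof (rule finite_measure_mono)
    have "0 < (\<Sum>j<k. Y j \<omega>)" if "real k / real (Suc r) < (\<Sum>j<k. Y j \<omega>)" for k r \<omega>
      using that by (rule order.strict_trans1[rotated]) simp
    then show "?T \<subseteq> {\<omega>\<in>space M. \<exists>k. 0 < (\<Sum>j<k. Y j \<omega>)}"
      unfolding pos_upper_rate_def by blast
  qed measurable
  ultimately have "prob ?T = 0"
    using prob_partial_sum_pos_lt_1[OF assms] by linarith
  then have "AE \<omega> in M. \<omega> \<notin> ?T"
    using prob_eq_0[OF T_events] by simp
  from this AE_space show ?thesis by eventually_elim auto
qed

lemma AE_eventually_partial_sum_le: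
  assumes "expectation (Y 0) < c"
  shows "AE \<omega> in M. eventually (\<lambda>k. (\<Sum>j<k. Y j \<omega>) \<le> real k * c) sequentially"
proof -
  define c' where "c' = (expectation (Y 0) + c) / 2"
  interpret Z: iid_seq M "\<lambda>j \<omega>. 1 * Y j \<omega> + - c'" by (rule iid_seq_affine)
  have "expectation (\<lambda>\<omega>. 1 * Y 0 \<omega> + - c') < 0"
    using assms integrable_Y0 by (simp add: prob_space c'_def)
  from Z.AE_not_pos_upper_rate[OF this] show ?thesis
  proof eventually_elim
    case (elim \<omega>)
    have "0 < c - c'" using assms by (simp add: c'_def)
    then obtain r where r: "inverse (real (Suc r)) < c - c'" using reals_Archimedean by blast
    from elim obtain K where K: "\<And>k. K \<le> k \<Longrightarrow> (\<Sum>j<k. Y j \<omega> - c') \<le> real k / real (Suc r)"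
      unfolding pos_upper_rate_def by (auto simp: not_less)
    show ?case
    proof (rule eventually_sequentiallyI)
      fix k assume "K \<le> k"
      then have "(\<Sum>j<k. Y j \<omega>) \<le> real k * c' + real k * inverse (real (Suc r))"
        using K[of k] by (simp add: sum_subtractf divide_inverse algebra_simps)
      also have "\<dots> \<le> real k * c' + real k * (c - c')"
        using r by (intro add_left_mono mult_left_mono) auto
      finally show "(\<Sum>j<k. Y j \<omega>) \<le> real k * c" by (simp add: algebra_simps)
    qed
  qed
qed

theorem strong_law_of_large_numbers:
  "AE \<omega> in M. (\<lambda>m. (\<Sum>j<m. Y j \<omega>) / real m) \<longlonglongrightarrow> expectation (Y 0)"
proof -
  let ?\<mu> = "expectation (Y 0)"
  interpret neg: iid_seq M "\<lambda>j \<omega>. (-1) * Y j \<omega> + 0" by (rule iid_seq_affine)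
  have "AE \<omega> in M. \<forall>r::nat. eventually (\<lambda>k. (\<Sum>j<k. Y j \<omega>) \<le> real k * (?\<mu> + 1 / real (Suc r))) sequentially
        \<and> eventually (\<lambda>k. (\<Sum>j<k. (-1) * Y j \<omega> + 0) \<le> real k * (- ?\<mu> + 1 / real (Suc r))) sequentially"
    unfolding AE_all_countable
    by (intro allI AE_conjI AE_eventually_partial_sum_le neg.AE_eventually_partial_sum_le) simp_all
  then show ?thesis
  proof eventually_elim
    case (elim \<omega>)
    show ?case
    proof (rule tendsto_average_of_rate_bounds)
      fix r :: nat
      show "eventually (\<lambda>k. \<bar>(\<Sum>j<k. Y j \<omega>) - real k * ?\<mu>\<bar> \<le> real k / real (Suc r)) sequentially"
        using elim[rule_format, of r] unfolding eventually_conj_iff[symmetric]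
        by (rule eventually_mono) (simp add: sum_negf algebra_simps abs_le_iff)
    qed
  qed
qed

end

lemma (in prob_space) strong_law_iid_copies:
  assumes indep: "indep_vars (\<lambda>_. S) Z UNIV"
    and distr_Z: "\<And>j. distr M S (Z j) = distr M S Z'"
    and Z': "Z' \<in> measurable M S"
    and F: "F \<in> borel_measurable S"
    and integrable_F: "integrable M (\<lambda>\<omega>. F (Z' \<omega>))"
  shows "AE \<omega> in M. (\<lambda>m. (\<Sum>l<m. F (Z l \<omega>)) / real m) \<longlonglongrightarrow> expectation (\<lambda>\<omega>. F (Z' \<omega>))"
proof -
  have Z: "Z j \<in> measurable M S" for j
    using indep unfolding indep_vars_def by auto
  have distr_F: "distr M borel (\<lambda>\<omega>. F (Z j \<omega>)) = distr M borel (\<lambda>\<omega>. F (Z' \<omega>))" for j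
  proof -
    have "distr M borel (\<lambda>\<omega>. F (Z j \<omega>)) = distr (distr M S (Z j)) borel F"
      using Z F by (subst distr_distr) (auto simp: comp_def)
    also have "\<dots> = distr M borel (\<lambda>\<omega>. F (Z' \<omega>))"
      using Z' F by (subst distr_Z, subst distr_distr) (auto simp: comp_def)
    finally show ?thesis .
  qed
  have integrable_F0: "integrable M (\<lambda>\<omega>. F (Z 0 \<omega>))"
    using integrable_F integrable_distr_eq[OF Z F] integrable_distr_eq[OF Z' F] distr_Z by metis
  have expectation_F0: "expectation (\<lambda>\<omega>. F (Z 0 \<omega>)) = expectation (\<lambda>\<omega>. F (Z' \<omega>))"
    using integral_distr[OF Z F] integral_distr[OF Z' F] distr_Z by metis
  interpret iid_seq M "\<lambda>l \<omega>. F (Z l \<omega>)"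
  proof
    show "indep_vars (\<lambda>_. borel) (\<lambda>l \<omega>. F (Z l \<omega>)) UNIV"
      using F by (intro indep_vars_compose2[OF indep]) auto
  qed (use distr_F integrable_F0 in auto)
  show ?thesis
    using strong_law_of_large_numbers unfolding expectation_F0 .
qed

section \<open>Continuity of matrix inversion\<close>

lemma matrix_inv_right: "invertible A \<Longrightarrow> A ** matrix_inv A = mat 1"
  unfolding invertible_def matrix_inv_def by (metis (mono_tags, lifting) someI_ex)

lemma tendsto_det [tendsto_intros]:
  fixes A :: "'a \<Rightarrow> real^'n^'n"
  shows "(A \<longlongrightarrow> A0) F \<Longrightarrow> ((\<lambda>x. det (A x)) \<longlongrightarrow> det A0) F"
  unfolding det_def by (intro tendsto_intros)

lemma matrix_inv_mult_vec_eq_cramer: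
  fixes A :: "real^'n^'n"
  assumes "invertible A"
  shows "matrix_inv A *v b = (\<chi> k. det (\<chi> i j. if j = k then b $ i else A $ i $ j) / det A)"
proof -
  have "A *v (matrix_inv A *v b) = b"
    by (simp add: matrix_vector_mul_assoc matrix_inv_right[OF assms])
  then show ?thesis
    using cramer[of A "matrix_inv A *v b" b] assms by (simp add: invertible_det_nz)
qed

lemma eventually_invertible:
  fixes A :: "'a \<Rightarrow> real^'n^'n"
  assumes "(A \<longlongrightarrow> A0) F" and "invertible A0"
  shows "eventually (\<lambda>x. invertible (A x)) F"
  using tendsto_imp_eventually_ne[OF tendsto_det[OF assms(1)]] assms(2)
  by (simp add: invertible_det_nz)

lemma tendsto_matrix_inv_mult_vec:
  fixes A :: "'a \<Rightarrow> real^'n^'n"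
  assumes A: "(A \<longlongrightarrow> A0) F" and b: "(b \<longlongrightarrow> b0) F" and "invertible A0"
  shows "((\<lambda>x. matrix_inv (A x) *v b x) \<longlongrightarrow> matrix_inv A0 *v b0) F"
proof -
  have "det A0 \<noteq> 0" using \<open>invertible A0\<close> by (simp add: invertible_det_nz)
  have "eventually (\<lambda>x. invertible (A x)) F"
    using A \<open>invertible A0\<close> by (rule eventually_invertible)
  then have "eventually (\<lambda>x. (\<chi> k. det (\<chi> i j. if j = k then b x $ i else A x $ i $ j) / det (A x))
      = matrix_inv (A x) *v b x) F"
    by (rule eventually_mono) (simp add: matrix_inv_mult_vec_eq_cramer)
  moreover have "((\<lambda>x. \<chi> k. det (\<chi> i j. if j = k then b x $ i else A x $ i $ j) / det (A x))
      \<longlongrightarrow> (\<chi> k. det (\<chi> i j. if j = k then b0 $ i else A0 $ i $ j) / det A0)) F"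
  proof (rule vec_tendstoI, unfold vec_lambda_beta)
    fix k
    have "((\<lambda>x. if j = k then b x $ i else A x $ i $ j) \<longlongrightarrow> (if j = k then b0 $ i else A0 $ i $ j)) F"
      for i j by (cases "j = k") (simp_all add: tendsto_vec_nth A b)
    then have "((\<lambda>x. \<chi> i j. if j = k then b x $ i else A x $ i $ j)
        \<longlongrightarrow> (\<chi> i j. if j = k then b0 $ i else A0 $ i $ j)) F"
      by (intro vec_tendstoI) simp
    then show "((\<lambda>x. det (\<chi> i j. if j = k then b x $ i else A x $ i $ j) / det (A x))
        \<longlongrightarrow> det (\<chi> i j. if j = k then b0 $ i else A0 $ i $ j) / det A0) F"
      by (rule tendsto_divide[OF tendsto_det tendsto_det[OF A] \<open>det A0 \<noteq> 0\<close>])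
  qed
  ultimately show ?thesis
    using \<open>invertible A0\<close> by (simp add: tendsto_cong matrix_inv_mult_vec_eq_cramer)
qed

lemma matrix_inv_scaleR_mult_vec:
  fixes A :: "real^'n^'n"
  assumes "c \<noteq> 0" and "invertible A"
  shows "matrix_inv (c *\<^sub>R A) *v (c *\<^sub>R b) = matrix_inv A *v b"
proof (rule injD[OF inj_matrix_vector_mult[OF assms(2)]])
  have "invertible (c *\<^sub>R A)" using assms by (rule scalar_invertible)
  then have "(c *\<^sub>R A) *v (matrix_inv (c *\<^sub>R A) *v (c *\<^sub>R b)) = c *\<^sub>R b"
    by (simp add: matrix_vector_mul_assoc matrix_inv_right)
  then show "A *v (matrix_inv (c *\<^sub>R A) *v (c *\<^sub>R b)) = A *v (matrix_inv A *v b)"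
    unfolding scaleR_matrix_vector_assoc[symmetric]
    using assms by (simp add: matrix_vector_mul_assoc matrix_inv_right)
qed

section \<open>Convergence of the empirical regression iteration\<close>

definition gram_integrand :: "('k::finite \<Rightarrow> 'x \<Rightarrow> nat \<Rightarrow> real) \<Rightarrow> nat \<Rightarrow> 'k \<Rightarrow> 'k
    \<Rightarrow> (nat \<Rightarrow> 'x) \<Rightarrow> real" where
  "gram_integrand \<phi> N i j h = (\<Sum>n<N. \<phi> i (h n) n * \<phi> j (h n) n)"

definition target_integrand :: "nat \<Rightarrow> ('x \<Rightarrow> real) \<Rightarrow> ('k::finite \<Rightarrow> 'x \<Rightarrow> nat \<Rightarrow> real)
    \<Rightarrow> real^'k \<Rightarrow> 'k \<Rightarrow> (nat \<Rightarrow> 'x) \<Rightarrow> real" where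
  "target_integrand N g \<phi> \<theta> i h = (\<Sum>n<N. \<phi> i (h n) n * contval N g \<phi> \<theta> (Suc n) (h (Suc n)))"

lemma gram_eq_integral: "gram M X N \<phi> $ i $ j = (\<integral>\<omega>. gram_integrand \<phi> N i j (X \<omega>) \<partial>M)"
  unfolding gram_def gram_integrand_def by simp

lemma emp_gram_eq_sum: "emp_gram xs m N \<phi> $ i $ j = (\<Sum>l<m. gram_integrand \<phi> N i j (xs l))"
  unfolding emp_gram_def gram_integrand_def by simp

lemma target_eq_integral: "target M X N g \<phi> \<theta> $ i = (\<integral>\<omega>. target_integrand N g \<phi> \<theta> i (X \<omega>) \<partial>M)"
  unfolding target_def target_integrand_def by simp

lemma emp_target_eq_sum: "emp_target xs m N g \<phi> \<theta> $ i = (\<Sum>l<m. target_integrand N g \<phi> \<theta> i (xs l))"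
  unfolding emp_target_def target_integrand_def by simp

lemma gram_integrand_restrict: "gram_integrand \<phi> N i j (restrict h {..N}) = gram_integrand \<phi> N i j h"
  unfolding gram_integrand_def by (intro sum.cong) auto

lemma target_integrand_restrict:
  "target_integrand N g \<phi> \<theta> i (restrict h {..N}) = target_integrand N g \<phi> \<theta> i h"
  unfolding target_integrand_def by (intro sum.cong) auto

lemma
  fixes \<phi> :: "'k::finite \<Rightarrow> 'x::topological_space \<Rightarrow> nat \<Rightarrow> real"
  assumes [measurable]: "\<And>k n. (\<lambda>x. \<phi> k x n) \<in> borel_measurable borel"
  shows measurable_gram_integrand:
      "gram_integrand \<phi> N i j \<in> borel_measurable (\<Pi>\<^sub>M n\<in>{..N}. borel)"
    and measurable_target_integrand:
      "g \<in> borel_measurable borel \<Longrightarrow> target_integrand N g \<phi> \<theta> i \<in> borel_measurable (\<Pi>\<^sub>M n\<in>{..N}. borel)"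
proof -
  have [measurable]: "(\<lambda>h. h n) \<in> measurable (\<Pi>\<^sub>M n\<in>{..N}. borel) (borel :: 'x measure)" if "n \<le> N" for n
    using that by (intro measurable_component_singleton) auto
  show "gram_integrand \<phi> N i j \<in> borel_measurable (\<Pi>\<^sub>M n\<in>{..N}. borel)"
    unfolding gram_integrand_def by measurable
  show "target_integrand N g \<phi> \<theta> i \<in> borel_measurable (\<Pi>\<^sub>M n\<in>{..N}. borel)"
    if [measurable]: "g \<in> borel_measurable borel"
    unfolding target_integrand_def contval_def Phi_def by measurable
qed

locale bounded_basis =
  fixes \<phi> :: "'k::finite \<Rightarrow> 'x \<Rightarrow> nat \<Rightarrow> real" and B :: real
  assumes \<phi>_bound: "\<And>k x n. \<bar>\<phi> k x n\<bar> \<le> B"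
begin

lemma abs_Phi_le: "\<bar>Phi \<phi> \<theta> n x\<bar> \<le> B * (\<Sum>k\<in>UNIV. \<bar>\<theta> $ k\<bar>)"
proof -
  have "\<bar>Phi \<phi> \<theta> n x\<bar> \<le> (\<Sum>k\<in>UNIV. \<bar>\<theta> $ k\<bar> * B)"
    unfolding Phi_def by (intro order.trans[OF sum_abs] sum_mono) (simp add: abs_mult mult_left_mono \<phi>_bound)
  then show ?thesis by (simp add: sum_distrib_left mult.commute)
qed

lemma Phi_diff: "Phi \<phi> \<theta> n x - Phi \<phi> \<theta>' n x = Phi \<phi> (\<theta> - \<theta>') n x"
  unfolding Phi_def by (simp add: sum_subtractf left_diff_distrib)

lemma abs_contval_le: "\<bar>contval N g \<phi> \<theta> n x\<bar> \<le> \<bar>g x\<bar> + B * (\<Sum>k\<in>UNIV. \<bar>\<theta> $ k\<bar>)"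
  using abs_Phi_le[of \<theta> n x] by (auto simp: contval_def max_def)

lemma abs_contval_diff_le:
  "\<bar>contval N g \<phi> \<theta> n x - contval N g \<phi> \<theta>' n x\<bar> \<le> B * (\<Sum>k\<in>UNIV. \<bar>\<theta> $ k - \<theta>' $ k\<bar>)"
proof -
  have "0 \<le> B" using \<phi>_bound[of undefined undefined undefined] by linarith
  then have "0 \<le> B * (\<Sum>k\<in>UNIV. \<bar>\<theta> $ k - \<theta>' $ k\<bar>)" by (simp add: sum_nonneg)
  moreover have "\<bar>Phi \<phi> \<theta> n x - Phi \<phi> \<theta>' n x\<bar> \<le> B * (\<Sum>k\<in>UNIV. \<bar>\<theta> $ k - \<theta>' $ k\<bar>)"
    using abs_Phi_le[of "\<theta> - \<theta>'" n x] by (simp add: Phi_diff)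
  ultimately show ?thesis by (auto simp: contval_def max_def)
qed

lemma abs_gram_integrand_le: "\<bar>gram_integrand \<phi> N i j h\<bar> \<le> real N * (B * B)"
proof -
  have "\<bar>gram_integrand \<phi> N i j h\<bar> \<le> (\<Sum>n<N. B * B)"
    unfolding gram_integrand_def
    by (intro order.trans[OF sum_abs] sum_mono) (simp add: abs_mult mult_mono' \<phi>_bound)
  then show ?thesis by simp
qed

lemma abs_target_integrand_le:
  "\<bar>target_integrand N g \<phi> \<theta> i h\<bar> \<le> (\<Sum>n<N. B * (\<bar>g (h (Suc n))\<bar> + B * (\<Sum>k\<in>UNIV. \<bar>\<theta> $ k\<bar>)))"
  unfolding target_integrand_def
  by (intro order.trans[OF sum_abs] sum_mono) (simp add: abs_mult mult_mono' \<phi>_bound abs_contval_le)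

lemma abs_target_integrand_diff_le:
  "\<bar>target_integrand N g \<phi> \<theta> i h - target_integrand N g \<phi> \<theta>' i h\<bar>
     \<le> real N * (B * (B * (\<Sum>k\<in>UNIV. \<bar>\<theta> $ k - \<theta>' $ k\<bar>)))"
proof -
  have "\<bar>target_integrand N g \<phi> \<theta> i h - target_integrand N g \<phi> \<theta>' i h\<bar>
      \<le> (\<Sum>n<N. B * (B * (\<Sum>k\<in>UNIV. \<bar>\<theta> $ k - \<theta>' $ k\<bar>)))"
    unfolding target_integrand_def sum_subtractf[symmetric] right_diff_distrib[symmetric]
    by (intro order.trans[OF sum_abs] sum_mono)
      (simp add: abs_mult mult_mono' \<phi>_bound abs_contval_diff_le)
  then show ?thesis by simp
qed

lemma abs_emp_target_diff_le:
  "\<bar>emp_target xs m N g \<phi> \<theta> $ i - emp_target xs m N g \<phi> \<theta>' $ i\<bar>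
     \<le> real m * (real N * (B * (B * (\<Sum>k\<in>UNIV. \<bar>\<theta> $ k - \<theta>' $ k\<bar>))))"
proof -
  have "\<bar>emp_target xs m N g \<phi> \<theta> $ i - emp_target xs m N g \<phi> \<theta>' $ i\<bar>
      \<le> (\<Sum>l<m. real N * (B * (B * (\<Sum>k\<in>UNIV. \<bar>\<theta> $ k - \<theta>' $ k\<bar>))))"
    unfolding emp_target_eq_sum sum_subtractf[symmetric]
    by (intro order.trans[OF sum_abs] sum_mono abs_target_integrand_diff_le)
  then show ?thesis by simp
qed

lemma tendsto_scaled_emp_target:
  assumes T: "(\<lambda>m. (1 / real m) *\<^sub>R emp_target xs m N g \<phi> \<theta>) \<longlonglongrightarrow> T0"
    and \<theta>h: "\<theta>h \<longlonglongrightarrow> \<theta>"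
  shows "(\<lambda>m. (1 / real m) *\<^sub>R emp_target xs m N g \<phi> (\<theta>h m)) \<longlonglongrightarrow> T0"
proof -
  define S where "S m = (\<Sum>k\<in>UNIV. \<bar>\<theta>h m $ k - \<theta> $ k\<bar>)" for m
  have "S \<longlonglongrightarrow> (\<Sum>k\<in>UNIV. \<bar>\<theta> $ k - \<theta> $ k\<bar>)"
    unfolding S_def by (intro tendsto_intros \<theta>h)
  then have S: "(\<lambda>m. real N * (B * (B * S m))) \<longlonglongrightarrow> 0"
    using tendsto_mult_right_zero[OF tendsto_mult_right_zero[OF tendsto_mult_right_zero]] by simp
  have "(\<lambda>m. (1 / real m) *\<^sub>R (emp_target xs m N g \<phi> (\<theta>h m) - emp_target xs m N g \<phi> \<theta>)) \<longlonglongrightarrow> 0"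
  proof (rule vec_tendstoI, unfold zero_index)
    fix i
    show "(\<lambda>m. ((1 / real m) *\<^sub>R (emp_target xs m N g \<phi> (\<theta>h m) - emp_target xs m N g \<phi> \<theta>)) $ i) \<longlonglongrightarrow> 0"
    proof (rule Lim_null_comparison[OF _ S])
      show "eventually (\<lambda>m. norm (((1 / real m) *\<^sub>R (emp_target xs m N g \<phi> (\<theta>h m) - emp_target xs m N g \<phi> \<theta>)) $ i)
          \<le> real N * (B * (B * S m))) sequentially"
        using eventually_gt_at_top[of 0]
      proof eventually_elim
        case (elim m)
        then show ?case
          using abs_emp_target_diff_le[of xs m N g "\<theta>h m" i \<theta>]
          by (simp add: S_def abs_divide field_simps mult_ac)
      qed
    qed
  qed
  from tendsto_add[OF T this] show ?thesis
    by (simp add: scaleR_diff_right)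
qed

lemma tendsto_emp_iteration_step:
  assumes G: "(\<lambda>m. (1 / real m) *\<^sub>R emp_gram xs m N \<phi>) \<longlonglongrightarrow> G0"
    and T: "(\<lambda>m. (1 / real m) *\<^sub>R emp_target xs m N g \<phi> \<theta>) \<longlonglongrightarrow> T0"
    and \<theta>h: "\<theta>h \<longlonglongrightarrow> \<theta>" and "invertible G0"
  shows "(\<lambda>m. matrix_inv (emp_gram xs m N \<phi>) *v emp_target xs m N g \<phi> (\<theta>h m))
           \<longlonglongrightarrow> matrix_inv G0 *v T0"
proof -
  have "(\<lambda>m. matrix_inv ((1 / real m) *\<^sub>R emp_gram xs m N \<phi>) *v ((1 / real m) *\<^sub>R emp_target xs m N g \<phi> (\<theta>h m)))
      \<longlonglongrightarrow> matrix_inv G0 *v T0"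
    using G tendsto_scaled_emp_target[OF T \<theta>h] \<open>invertible G0\<close> by (rule tendsto_matrix_inv_mult_vec)
  moreover have "eventually (\<lambda>m.
      matrix_inv ((1 / real m) *\<^sub>R emp_gram xs m N \<phi>) *v ((1 / real m) *\<^sub>R emp_target xs m N g \<phi> (\<theta>h m))
      = matrix_inv (emp_gram xs m N \<phi>) *v emp_target xs m N g \<phi> (\<theta>h m)) sequentially"
    using eventually_invertible[OF G \<open>invertible G0\<close>] eventually_gt_at_top[of 0]
  proof eventually_elim
    case (elim m)
    have "invertible (emp_gram xs m N \<phi>)"
      using scalar_invertible[OF _ elim(1), of "real m"] elim(2) by simp
    then show ?case using elim by (simp add: matrix_inv_scaleR_mult_vec)
  qed
  ultimately show ?thesis by (rule Lim_transform_eventually)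
qed

end

locale iid_paths = prob_space +
  fixes X :: "'a \<Rightarrow> nat \<Rightarrow> 'x::topological_space" and xs :: "nat \<Rightarrow> 'a \<Rightarrow> nat \<Rightarrow> 'x" and N :: nat
  assumes X_meas: "\<forall>n\<le>N. (\<lambda>\<omega>. X \<omega> n) \<in> borel_measurable M"
    and indep_paths: "indep_vars (\<lambda>_. \<Pi>\<^sub>M n\<in>{..N}. borel) (\<lambda>j \<omega>. restrict (xs j \<omega>) {..N}) UNIV"
    and distr_paths: "\<forall>j. distr M (\<Pi>\<^sub>M n\<in>{..N}. borel) (\<lambda>\<omega>. restrict (xs j \<omega>) {..N})
                        = distr M (\<Pi>\<^sub>M n\<in>{..N}. borel) (\<lambda>\<omega>. restrict (X \<omega>) {..N})"
begin

lemma measurable_restrict_X [measurable]: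
  "(\<lambda>\<omega>. restrict (X \<omega>) {..N}) \<in> measurable M (\<Pi>\<^sub>M n\<in>{..N}. borel)"
  using X_meas by (intro measurable_restrict) auto

lemma AE_sample_mean_tendsto:
  assumes "F \<in> borel_measurable (\<Pi>\<^sub>M n\<in>{..N}. borel)"
    and "integrable M (\<lambda>\<omega>. F (restrict (X \<omega>) {..N}))"
  shows "AE \<omega> in M. (\<lambda>m. (\<Sum>l<m. F (restrict (xs l \<omega>) {..N})) / real m)
           \<longlonglongrightarrow> expectation (\<lambda>\<omega>. F (restrict (X \<omega>) {..N}))"
  using indep_paths distr_paths measurable_restrict_X assms
  by (intro strong_law_iid_copies[where Z = "\<lambda>j \<omega>. restrict (xs j \<omega>) {..N}" and F = F]) auto

end

locale sampled_regression = iid_paths M X xs N + bounded_basis \<phi> B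
  for M :: "'a measure" and X :: "'a \<Rightarrow> nat \<Rightarrow> 'x::topological_space" and xs N
    and \<phi> :: "'k::finite \<Rightarrow> 'x \<Rightarrow> nat \<Rightarrow> real" and B +
  fixes g :: "'x \<Rightarrow> real"
  assumes \<phi>_meas [measurable]: "\<And>k n. (\<lambda>x. \<phi> k x n) \<in> borel_measurable borel"
    and g_meas [measurable]: "g \<in> borel_measurable borel"
    and integrable_g: "\<And>n. n \<le> N \<Longrightarrow> integrable M (\<lambda>\<omega>. g (X \<omega> n))"
begin

lemma AE_tendsto_scaled_emp_gram:
  "AE \<omega> in M. (\<lambda>m. (1 / real m) *\<^sub>R emp_gram (\<lambda>j. xs j \<omega>) m N \<phi>) \<longlonglongrightarrow> gram M X N \<phi>"
proof -
  have integrable_gram: "integrable M (\<lambda>\<omega>. gram_integrand \<phi> N i j (restrict (X \<omega>) {..N}))" for i j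
  proof (rule integrable_const_bound)
    show "AE \<omega> in M. norm (gram_integrand \<phi> N i j (restrict (X \<omega>) {..N})) \<le> real N * (B * B)"
      using abs_gram_integrand_le by simp
  qed (rule measurable_compose[OF measurable_restrict_X measurable_gram_integrand[OF \<phi>_meas]])
  then have "AE \<omega> in M. \<forall>i\<in>UNIV. \<forall>j\<in>UNIV.
      (\<lambda>m. (\<Sum>l<m. gram_integrand \<phi> N i j (restrict (xs l \<omega>) {..N})) / real m)
        \<longlonglongrightarrow> expectation (\<lambda>\<omega>. gram_integrand \<phi> N i j (restrict (X \<omega>) {..N}))"
    by (intro AE_finite_allI AE_sample_mean_tendsto measurable_gram_integrand[OF \<phi>_meas] integrable_gram) auto
  then show ?thesis
    by eventually_elim
      (auto intro!: vec_tendstoI simp: emp_gram_eq_sum gram_eq_integral gram_integrand_restrict)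
qed

lemma AE_tendsto_scaled_emp_target:
  "AE \<omega> in M. (\<lambda>m. (1 / real m) *\<^sub>R emp_target (\<lambda>j. xs j \<omega>) m N g \<phi> \<theta>)
     \<longlonglongrightarrow> target M X N g \<phi> \<theta>"
proof -
  have integrable_target: "integrable M (\<lambda>\<omega>. target_integrand N g \<phi> \<theta> i (restrict (X \<omega>) {..N}))" for i
  proof (rule Bochner_Integration.integrable_bound)
    show "integrable M (\<lambda>\<omega>. \<Sum>n<N. B * (\<bar>g (X \<omega> (Suc n))\<bar> + B * (\<Sum>k\<in>UNIV. \<bar>\<theta> $ k\<bar>)))"
      using integrable_g by auto
    show "AE \<omega> in M. norm (target_integrand N g \<phi> \<theta> i (restrict (X \<omega>) {..N}))
        \<le> norm (\<Sum>n<N. B * (\<bar>g (X \<omega> (Suc n))\<bar> + B * (\<Sum>k\<in>UNIV. \<bar>\<theta> $ k\<bar>)))"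
    proof (rule AE_I2)
      fix \<omega>
      have "\<bar>target_integrand N g \<phi> \<theta> i (X \<omega>)\<bar>
          \<le> (\<Sum>n<N. B * (\<bar>g (X \<omega> (Suc n))\<bar> + B * (\<Sum>k\<in>UNIV. \<bar>\<theta> $ k\<bar>)))"
        by (rule abs_target_integrand_le)
      then show "norm (target_integrand N g \<phi> \<theta> i (restrict (X \<omega>) {..N}))
          \<le> norm (\<Sum>n<N. B * (\<bar>g (X \<omega> (Suc n))\<bar> + B * (\<Sum>k\<in>UNIV. \<bar>\<theta> $ k\<bar>)))"
        by (simp add: target_integrand_restrict del: restrict_apply)
    qed
  qed (rule measurable_compose[OF measurable_restrict_X measurable_target_integrand[OF \<phi>_meas g_meas]])
  then have "AE \<omega> in M. \<forall>i\<in>UNIV.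
      (\<lambda>m. (\<Sum>l<m. target_integrand N g \<phi> \<theta> i (restrict (xs l \<omega>) {..N})) / real m)
        \<longlonglongrightarrow> expectation (\<lambda>\<omega>. target_integrand N g \<phi> \<theta> i (restrict (X \<omega>) {..N}))"
    by (intro AE_finite_allI AE_sample_mean_tendsto measurable_target_integrand[OF \<phi>_meas g_meas]
        integrable_target) auto
  then show ?thesis
    by eventually_elim
      (auto intro!: vec_tendstoI simp: emp_target_eq_sum target_eq_integral target_integrand_restrict)
qed

theorem AE_theta_hat_tendsto_theta:
  assumes "invertible (gram M X N \<phi>)"
  shows "AE \<omega> in M. (\<lambda>m. theta_hat (\<lambda>j. xs j \<omega>) m N g \<phi> \<alpha> \<theta>0 i)
           \<longlonglongrightarrow> theta M X N g \<phi> \<alpha> \<theta>0 i"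
proof (induction i)
  case (Suc i)
  from Suc AE_tendsto_scaled_emp_gram AE_tendsto_scaled_emp_target[of "theta M X N g \<phi> \<alpha> \<theta>0 i"]
  show ?case
  proof eventually_elim
    case (elim \<omega>)
    show ?case
      unfolding theta_hat.simps theta.simps
      by (intro tendsto_scaleR tendsto_const tendsto_emp_iteration_step[OF elim(2,3,1) assms])
  qed
qed simp

end

theorem lemma9:
  fixes M :: "'w measure"
    and X :: "'w \<Rightarrow> nat \<Rightarrow> real^'d"
    and xs :: "nat \<Rightarrow> 'w \<Rightarrow> nat \<Rightarrow> real^'d"
    and \<sigma> :: "real \<Rightarrow> real"
    and a :: "'k::finite \<Rightarrow> real^'d" and c :: "'k \<Rightarrow> real" and b :: "'k \<Rightarrow> real"
    and g :: "real^'d \<Rightarrow> real"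
    and \<alpha> :: real and \<theta>0 :: "real^'k" and N i :: nat
  assumes "prob_space M"
    and "N \<ge> 1"
    and X_meas: "\<forall>n\<le>N. (\<lambda>\<omega>. X \<omega> n) \<in> borel_measurable M"
    and "markov_process M X N"
    and "\<sigma> \<in> borel_measurable borel" and "bounded (range \<sigma>)"
    and "g \<in> borel_measurable borel" and "\<forall>x. g x \<ge> 0"
    and "\<forall>n\<le>N. integrable M (\<lambda>\<omega>. g (X \<omega> n))"
    and "0 < \<alpha>" and "\<alpha> < 1"
    and "invertible (gram M X N (rbf \<sigma> a c b))"
    and "\<forall>j. \<forall>n\<le>N. (\<lambda>\<omega>. xs j \<omega> n) \<in> borel_measurable M"
    and "prob_space.indep_vars M (\<lambda>_. PiM {..N} (\<lambda>_. borel))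
           (\<lambda>j \<omega>. restrict (xs j \<omega>) {..N}) UNIV"
    and "\<forall>j. distr M (PiM {..N} (\<lambda>_. borel)) (\<lambda>\<omega>. restrict (xs j \<omega>) {..N})
             = distr M (PiM {..N} (\<lambda>_. borel)) (\<lambda>\<omega>. restrict (X \<omega>) {..N})"
  shows "AE \<omega> in M. (\<lambda>m. theta_hat (\<lambda>j. xs j \<omega>) m N g (rbf \<sigma> a c b) \<alpha> \<theta>0 i)
                      \<longlonglongrightarrow> theta M X N g (rbf \<sigma> a c b) \<alpha> \<theta>0 i"
proof -
  interpret prob_space M by fact
  obtain B where B: "\<And>t. \<bar>\<sigma> t\<bar> \<le> B"
    using \<open>bounded (range \<sigma>)\<close> unfolding bounded_real by auto
  interpret sampled_regression M X xs N "rbf \<sigma> a c b" B g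
  proof
    show "\<And>k n. (\<lambda>x. rbf \<sigma> a c b k x n) \<in> borel_measurable borel"
      unfolding rbf_def using \<open>\<sigma> \<in> borel_measurable borel\<close> by measurable
    show "\<And>k x n. \<bar>rbf \<sigma> a c b k x n\<bar> \<le> B"
      unfolding rbf_def by (rule B)
  qed (use assms in auto)
  show ?thesis
    using \<open>invertible (gram M X N (rbf \<sigma> a c b))\<close> by (rule AE_theta_hat_tendsto_theta)
qed

end
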